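(* Let $G=(V,E)$ be a finite, undirected, unweighted, connected graph with $n=|V|$ vertices. If $P$ is a shortest walk in $G$ visiting every vertex at least once, then $n\le \mathrm{len}(P)\le 0.5n^2+0.5n$. If $C$ is a shortest closed walk in $G$ visiting every vertex at least once, then $n\le\mathrm{len}(C)\le 0.5n^2+1.5n-1$.
   Context: A walk in $G$ is a sequence $(u_1,\dots,u_h)$ of vertices with $\{u_t,u_{t+1}\}\in E$ for all $t$ (repetitions allowed), and its length is $\mathrm{len}(u_1,\dots,u_h)=h$, the number of entries counted with multiplicity. A closed walk is a walk with $u_1=u_h$. A shortest walk (resp. closed walk) visiting every vertex is one of minimum length among all walks (resp. closed walks) whose set of entries is $V$. *)

theory Defs
  imports Complex_Main
begin

definition simple_graph :: "'a set \<Rightarrow> ('a \<Rightarrow> 'a \<Rightarrow> bool) \<Rightarrow> bool" where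
  "simple_graph V E \<longleftrightarrow> finite V \<and> (\<forall>u v. E u v \<longrightarrow> E v u) \<and> (\<forall>u. \<not> E u u)
     \<and> (\<forall>u v. E u v \<longrightarrow> u \<in> V \<and> v \<in> V)"

text \<open>A walk (u_1,...,u_h), h \<ge> 1, with consecutive entries adjacent; length = h.\<close>
definition is_walk :: "('a \<Rightarrow> 'a \<Rightarrow> bool) \<Rightarrow> 'a list \<Rightarrow> bool" where
  "is_walk E w \<longleftrightarrow> w \<noteq> [] \<and> (\<forall>t. Suc t < length w \<longrightarrow> E (w ! t) (w ! Suc t))"

definition is_closed_walk :: "('a \<Rightarrow> 'a \<Rightarrow> bool) \<Rightarrow> 'a list \<Rightarrow> bool" where
  "is_closed_walk E w \<longleftrightarrow> is_walk E w \<and> hd w = last w"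

definition connected_graph :: "'a set \<Rightarrow> ('a \<Rightarrow> 'a \<Rightarrow> bool) \<Rightarrow> bool" where
  "connected_graph V E \<longleftrightarrow> V \<noteq> {} \<and>
     (\<forall>u\<in>V. \<forall>v\<in>V. \<exists>w. is_walk E w \<and> hd w = u \<and> last w = v)"

definition shortest_covering_walk :: "'a set \<Rightarrow> ('a \<Rightarrow> 'a \<Rightarrow> bool) \<Rightarrow> 'a list \<Rightarrow> bool" where
  "shortest_covering_walk V E P \<longleftrightarrow> is_walk E P \<and> set P = V \<and>
     (\<forall>w. is_walk E w \<and> set w = V \<longrightarrow> length P \<le> length w)"

definition shortest_covering_closed_walk :: "'a set \<Rightarrow> ('a \<Rightarrow> 'a \<Rightarrow> bool) \<Rightarrow> 'a list \<Rightarrow> bool" where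
  "shortest_covering_closed_walk V E C \<longleftrightarrow> is_closed_walk E C \<and> set C = V \<and>
     (\<forall>w. is_closed_walk E w \<and> set w = V \<longrightarrow> length C \<le> length w)"

end

theory Submission
  imports Defs
begin

text \<open>Build a covering walk greedily: once k vertices have been visited, walk to the first
unvisited vertex on a repetition-free path towards any unvisited vertex. All earlier vertices
of that path are visited, so it adds at most k edges. Starting from a single vertex, the walk
therefore has at most 1 + (1 + 2 + ... + (n - 1)) = 1 + (n choose 2) entries, and the shortest
covering walk is no longer. For the closed walk, append a path back to the start that stops at
its first visit of the start vertex: it adds at most n - 1 edges.\<close>

lemma is_walk_iff_successively: "is_walk E w \<longleftrightarrow> w \<noteq> [] \<and> successively E w"
  unfolding is_walk_def successively_conv_nth by auto

lemma successively_append_tl: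
  assumes "successively E w" "successively E p" "p \<noteq> []" "hd p = last w"
  shows "successively E (w @ tl p)"
proof (cases "tl p")
  case Nil
  then show ?thesis using assms(1) by simp
next
  case (Cons x xs)
  with assms(3,4) have "p = last w # x # xs" by (cases p) auto
  with assms(1,2) show ?thesis by (auto simp: successively_append_iff)
qed

lemma last_append_tl: "p \<noteq> [] \<Longrightarrow> hd p = last w \<Longrightarrow> last (w @ tl p) = last p"
  by (cases p) auto

lemma set_append_tl: "w \<noteq> [] \<Longrightarrow> p \<noteq> [] \<Longrightarrow> hd p = last w \<Longrightarrow> set (w @ tl p) = set w \<union> set p"
  by (cases p) auto

lemma successively_shortcut_distinct:
  assumes "successively E w" "w \<noteq> []"
  shows "\<exists>q. successively E q \<and> q \<noteq> [] \<and> distinct q \<and> hd q = hd w \<and> last q = last w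
           \<and> set q \<subseteq> set w"
  using assms
proof (induction "length w" arbitrary: w rule: less_induct)
  case less
  show ?case
  proof (cases "distinct w")
    case True
    then show ?thesis using less.prems by blast
  next
    case False
    then obtain xs y ys zs where w: "w = xs @ [y] @ ys @ [y] @ zs"
      using not_distinct_decomp by blast
    let ?w' = "xs @ [y] @ zs"
    have "successively E ?w'"
      using less.prems(1) unfolding w by (auto simp: successively_append_iff successively_Cons)
    moreover have "hd ?w' = hd w" "last ?w' = last w" "set ?w' \<subseteq> set w"
      unfolding w by (cases xs; cases zs; auto)+
    moreover have "length ?w' < length w" unfolding w by simp
    ultimately show ?thesis using less.hyps[of ?w'] by fastforce
  qed
qed

lemma successively_exit_path:
  assumes "successively E w" "w \<noteq> []" "last w \<notin> S" "finite S"
  shows "\<exists>p. successively E p \<and> p \<noteq> [] \<and> hd p = hd w \<and> last p \<notin> S \<and> set p \<subseteq> set w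
           \<and> length p \<le> card S + 1"
proof -
  obtain q where q: "successively E q" "q \<noteq> []" "distinct q" "hd q = hd w" "last q = last w"
      "set q \<subseteq> set w"
    using successively_shortcut_distinct[OF assms(1,2)] by blast
  have "\<exists>x\<in>set q. x \<notin> S" using q(2,5) assms(3) last_in_set by metis
  then obtain ys x zs where split: "q = ys @ x # zs" "x \<notin> S" "\<forall>y\<in>set ys. y \<in> S"
    using split_list_first_prop[of q "\<lambda>x. x \<notin> S"] by blast
  let ?p = "ys @ [x]"
  have "successively E ?p"
    using q(1) unfolding split(1) by (auto simp: successively_append_iff)
  moreover have "hd ?p = hd w" using q(4) unfolding split(1) by (cases ys) auto
  moreover have "set ?p \<subseteq> set w" using q(6) unfolding split(1) by auto
  moreover have "length ys \<le> card S"
  proof -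
    have "length ys = card (set ys)"
      using q(3) unfolding split(1) by (simp add: distinct_card)
    also have "\<dots> \<le> card S" using split(3) assms(4) by (intro card_mono) auto
    finally show ?thesis .
  qed
  ultimately show ?thesis using split(2) by (intro exI[of _ ?p]) auto
qed

lemma walk_subset_vertices:
  assumes "simple_graph V E" "successively E w" "w \<noteq> []" "hd w \<in> V"
  shows "set w \<subseteq> V"
  using assms(2-4)
proof (induction w)
  case Nil
  then show ?case by simp
next
  case (Cons x w)
  then show ?case using assms(1) unfolding simple_graph_def
    by (cases w) (auto simp: successively_Cons)
qed

lemma connected_exit_path:
  assumes G: "simple_graph V E" and C: "connected_graph V E"
    and "u \<in> V" "x \<in> V" "x \<notin> S" "finite S"
  obtains p where "successively E p" "p \<noteq> []" "hd p = u" "last p \<notin> S" "set p \<subseteq> V"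
    "length p \<le> card S + 1"
proof -
  obtain w where w: "is_walk E w" "hd w = u" "last w = x"
    using C assms(3,4) unfolding connected_graph_def by blast
  then have "successively E w" "w \<noteq> []" by (auto simp: is_walk_iff_successively)
  moreover have "set w \<subseteq> V" using walk_subset_vertices[OF G] calculation w(2) assms(3) by blast
  ultimately show ?thesis
    using that successively_exit_path[of E w S] w assms(5,6) by fastforce
qed

lemma walk_extend_to_unvisited:
  assumes G: "simple_graph V E" and C: "connected_graph V E"
    and w: "successively E w" "w \<noteq> []" "set w \<subseteq> V" "set w \<noteq> V"
  obtains w' where "successively E w'" "hd w' = hd w" "set w' \<subseteq> V"
    "card (set w) < card (set w')" "length w' \<le> length w + card (set w)"
proof -
  obtain x where x: "x \<in> V" "x \<notin> set w" using w(3,4) by blast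
  have "last w \<in> V" using w(2,3) by auto
  then obtain p where p: "successively E p" "p \<noteq> []" "hd p = last w" "last p \<notin> set w"
      "set p \<subseteq> V" "length p \<le> card (set w) + 1"
    using connected_exit_path[OF G C _ x] by blast
  let ?w' = "w @ tl p"
  have set_w': "set ?w' = set w \<union> set p" using set_append_tl[OF w(2) p(2,3)] .
  have "card (set w) < card (set ?w')"
  proof (rule psubset_card_mono)
    show "finite (set ?w')" by simp
    show "set w \<subset> set ?w'" using set_w' p(2,4) last_in_set by blast
  qed
  moreover have "successively E ?w'" using successively_append_tl[OF w(1) p(1-3)] .
  moreover have "hd ?w' = hd w" using w(2) by simp
  moreover have "set ?w' \<subseteq> V" using set_w' w(3) p(5) by blast
  moreover have "length ?w' \<le> length w + card (set w)" using p(6) by simp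
  ultimately show ?thesis using that by blast
qed

lemma walk_extend_to_covering:
  assumes G: "simple_graph V E" and C: "connected_graph V E"
    and "successively E w" "w \<noteq> []" "set w \<subseteq> V" "length w \<le> 1 + (card (set w) choose 2)"
  shows "\<exists>w'. successively E w' \<and> w' \<noteq> [] \<and> hd w' = hd w \<and> set w' = V
           \<and> length w' \<le> 1 + (card V choose 2)"
  using assms(3-6)
proof (induction "card V - card (set w)" arbitrary: w rule: less_induct)
  case less
  have fin: "finite V" using G by (simp add: simple_graph_def)
  show ?case
  proof (cases "set w = V")
    case True
    then show ?thesis using less.prems by blast
  next
    case False
    obtain w' where w': "successively E w'" "hd w' = hd w" "set w' \<subseteq> V"
        "card (set w) < card (set w')" "length w' \<le> length w + card (set w)"
      using walk_extend_to_unvisited[OF G C less.prems(1-3) False] by blast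
    have "w' \<noteq> []" using w'(4) by auto
    have "length w' \<le> 1 + (card (set w) choose 2) + card (set w)"
      using w'(5) less.prems(4) by simp
    also have "\<dots> = 1 + (Suc (card (set w)) choose 2)" by (simp add: numeral_2_eq_2)
    also have "\<dots> \<le> 1 + (card (set w') choose 2)"
      using w'(4) by (simp add: binomial_right_mono)
    finally have len: "length w' \<le> 1 + (card (set w') choose 2)" .
    have "card (set w') \<le> card V" using card_mono[OF fin w'(3)] .
    then have "card V - card (set w') < card V - card (set w)" using w'(4) by simp
    from less.hyps[OF this w'(1) \<open>w' \<noteq> []\<close> w'(3) len] show ?thesis
      using w'(2) by metis
  qed
qed

lemma covering_walk_exists:
  assumes G: "simple_graph V E" and C: "connected_graph V E"
  obtains w where "is_walk E w" "set w = V" "length w \<le> 1 + (card V choose 2)"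
proof -
  obtain v where v: "v \<in> V" using C unfolding connected_graph_def by blast
  have "successively E [v]" "[v] \<noteq> []" "set [v] \<subseteq> V" "length [v] \<le> 1 + (card (set [v]) choose 2)"
    using v by auto
  from walk_extend_to_covering[OF G C this] that show ?thesis
    by (auto simp: is_walk_iff_successively)
qed

lemma covering_closed_walk_exists:
  assumes G: "simple_graph V E" and C: "connected_graph V E"
  obtains c where "is_closed_walk E c" "set c = V" "length c \<le> (card V choose 2) + card V"
proof -
  obtain w where w: "is_walk E w" "set w = V" "length w \<le> 1 + (card V choose 2)"
    using covering_walk_exists[OF G C] .
  have fin: "finite V" using G by (simp add: simple_graph_def)
  have ne: "w \<noteq> []" "successively E w" using w(1) by (auto simp: is_walk_iff_successively)
  have ends: "hd w \<in> V" "last w \<in> V" using w(2) ne(1) by auto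
  obtain p where p: "successively E p" "p \<noteq> []" "hd p = last w" "last p \<notin> V - {hd w}"
      "set p \<subseteq> V" "length p \<le> card (V - {hd w}) + 1"
    using connected_exit_path[OF G C ends(2) ends(1), of "V - {hd w}"] fin by auto
  let ?c = "w @ tl p"
  have "last p = hd w" using p(2,4,5) last_in_set by fastforce
  then have "last ?c = hd w" using last_append_tl[OF p(2,3)] by simp
  then have "is_closed_walk E ?c"
    using successively_append_tl[OF ne(2) p(1-3)] ne(1)
    by (simp add: is_closed_walk_def is_walk_iff_successively)
  moreover have "set ?c = V" using set_append_tl[OF ne(1) p(2,3)] w(2) p(5) by blast
  moreover have "length ?c \<le> (card V choose 2) + card V"
  proof -
    have "card V > 0" using ends(1) fin card_gt_0_iff by blast
    then show ?thesis using w(3) p(6) ends(1) fin by (simp add: card_Diff_singleton)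
  qed
  ultimately show ?thesis using that by blast
qed

lemma real_choose_two: "real (n choose 2) = real n * (real n - 1) / 2"
  by (simp add: binomial_gbinomial gbinomial_prod_rev numeral_2_eq_2)

theorem lemma3:
  fixes V :: "'a set" and E :: "'a \<Rightarrow> 'a \<Rightarrow> bool"
  assumes "simple_graph V E" and "connected_graph V E"
  shows "(\<forall>P. shortest_covering_walk V E P \<longrightarrow>
            card V \<le> length P \<and> real (length P) \<le> 0.5 * real (card V)^2 + 0.5 * real (card V))
       \<and> (\<forall>C. shortest_covering_closed_walk V E C \<longrightarrow>
            card V \<le> length C \<and> real (length C) \<le> 0.5 * real (card V)^2 + 1.5 * real (card V) - 1)"
proof -
  obtain w where w: "is_walk E w" "set w = V" "length w \<le> 1 + (card V choose 2)"
    using covering_walk_exists[OF assms] .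
  obtain c where c: "is_closed_walk E c" "set c = V" "length c \<le> (card V choose 2) + card V"
    using covering_closed_walk_exists[OF assms] .
  have "card V \<ge> 1"
    using w(1,2) by (auto simp: is_walk_def Suc_le_eq card_gt_0_iff)
  then have "real (card V) \<ge> 1" by simp
  then have bounds: "real (1 + (card V choose 2)) \<le> 0.5 * real (card V)^2 + 0.5 * real (card V)"
      "real ((card V choose 2) + card V) \<le> 0.5 * real (card V)^2 + 1.5 * real (card V) - 1"
    by (simp_all add: real_choose_two power2_eq_square field_simps)
  show ?thesis
  proof (intro conjI allI impI)
    fix P assume "shortest_covering_walk V E P"
    then have "set P = V" "length P \<le> length w"
      using w(1,2) unfolding shortest_covering_walk_def by auto
    then show "card V \<le> length P" "real (length P) \<le> 0.5 * real (card V)^2 + 0.5 * real (card V)"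
      using card_length[of P] w(3) bounds(1) by (auto simp del: of_nat_add)
  next
    fix C assume "shortest_covering_closed_walk V E C"
    then have "set C = V" "length C \<le> length c"
      using c(1,2) unfolding shortest_covering_closed_walk_def by auto
    then show "card V \<le> length C"
      "real (length C) \<le> 0.5 * real (card V)^2 + 1.5 * real (card V) - 1"
      using card_length[of C] c(3) bounds(2) by (auto simp del: of_nat_add)
  qed
qed

end
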